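(* Let $K_\infty$ be the monoid given by the monoid presentation $\langle e,b \mid e^2=e,\ b^2=1\rangle$. The set of all semigroup identities $u\approx v$ (with $u,v$ nonempty words over a countably infinite alphabet) satisfied by $K_\infty$ has no finite basis. That is, there is no finite set $\Sigma$ of identities holding in $K_\infty$ such that every identity holding in $K_\infty$ is a consequence of $\Sigma$.
   Context: $K_\infty$ is the free product, in the category of monoids, of the two-element idempotent monoid $\mathbb{I}_2=\{1,e\}$ (with $e^2=e$) and the two-element group $\mathbb{C}_2=\{1,b\}$ (with $b^2=1$). Every non-identity element of $K_\infty$ has a unique representation as an alternating product of the letters $e$ and $b$. *)

theory Defs
  imports Main
begin

text \<open>Elements are represented by their unique normal forms: alternating words
over the letters E (idempotent e) and B (involution b); the empty word is 1.\<close>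

datatype kletter = E | B

definition kelems :: "kletter list set" where
  "kelems = {w. \<forall>i. Suc i < length w \<longrightarrow> w ! i \<noteq> w ! Suc i}"

fun kpush :: "kletter \<Rightarrow> kletter list \<Rightarrow> kletter list" where
  "kpush E (E # w) = E # w"
| "kpush B (B # w) = w"
| "kpush x w = x # w"

definition kmul :: "kletter list \<Rightarrow> kletter list \<Rightarrow> kletter list" where
  "kmul u v = foldr kpush u v"

text \<open>Words over the countably infinite alphabet nat; an identity is a pair of nonempty words.\<close>
type_synonym sword = "nat list"

definition keval :: "(nat \<Rightarrow> kletter list) \<Rightarrow> sword \<Rightarrow> kletter list" where
  "keval \<phi> w = foldr (\<lambda>x acc. kmul (\<phi> x) acc) w []"

definition K_sat :: "sword \<Rightarrow> sword \<Rightarrow> bool" where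
  "K_sat u v \<longleftrightarrow> (\<forall>\<phi>. (\<forall>x. \<phi> x \<in> kelems) \<longrightarrow> keval \<phi> u = keval \<phi> v)"

definition ssubst :: "(nat \<Rightarrow> sword) \<Rightarrow> sword \<Rightarrow> sword" where
  "ssubst \<sigma> w = concat (map \<sigma> w)"

inductive derivable :: "(sword \<times> sword) set \<Rightarrow> sword \<Rightarrow> sword \<Rightarrow> bool"
  for \<Sigma> :: "(sword \<times> sword) set" where
  ax: "(u, v) \<in> \<Sigma> \<Longrightarrow> derivable \<Sigma> u v"
| refl: "derivable \<Sigma> u u"
| sym: "derivable \<Sigma> u v \<Longrightarrow> derivable \<Sigma> v u"
| trans: "derivable \<Sigma> u v \<Longrightarrow> derivable \<Sigma> v w \<Longrightarrow> derivable \<Sigma> u w"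
| subst: "derivable \<Sigma> u v \<Longrightarrow> (\<forall>x. \<sigma> x \<noteq> []) \<Longrightarrow>
           derivable \<Sigma> (ssubst \<sigma> u) (ssubst \<sigma> v)"
| cong: "derivable \<Sigma> u v \<Longrightarrow> derivable \<Sigma> (p @ u @ q) (p @ v @ q)"

end

theory Submission
  imports Defs "HOL-Library.Multiset"
begin

text \<open>For \<open>n \<ge> 3\<close> let \<open>x = x\<^sub>0 \<cdots> x\<^sub>n\<^sub>-\<^sub>1\<close>, let \<open>x'\<close> be its reversal, and put \<open>u\<^sub>n = x x' x x\<close> and
\<open>v\<^sub>n = x x x' x\<close>. The identity \<open>u\<^sub>n \<approx> v\<^sub>n\<close> holds in \<open>K\<^sub>\<infinity>\<close>: if the value \<open>X\<close> of \<open>x\<close> contains \<open>e\<close>,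
then \<open>X A X C X\<close> is symmetric in \<open>A\<close> and \<open>C\<close>; otherwise every letter of \<open>x\<close> takes a value in the
commutative group \<open>{1, b}\<close>, so \<open>x'\<close> also takes the value \<open>X\<close>.
On the other hand, applying an identity \<open>s \<approx> t\<close> of \<open>K\<^sub>\<infinity>\<close> in fewer than \<open>n\<close> variables to \<open>u\<^sub>n\<close>
does not change it. By a computation on three-letter words, the two-letter projections of the
result either all agree with those of \<open>u\<^sub>n\<close>, which forces the result to be \<open>u\<^sub>n\<close>, or all agree
with those of \<open>v\<^sub>n\<close>. In the second case a finite analysis of the two-letter projection \<open>xyyxxyxy\<close> shows that every variable of \<open>s\<close> is
replaced by a single letter, so \<open>s\<close> would contain \<open>n\<close> variables. As every finite set of
identities has fewer than \<open>n\<close> variables per identity for some \<open>n\<close>, it cannot derive \<open>u\<^sub>n \<approx> v\<^sub>n\<close>.\<close>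

section \<open>The monoid \<open>K\<^sub>\<infinity>\<close>\<close>

lemma kelems_distinct_adj: "w \<in> kelems \<longleftrightarrow> distinct_adj w"
  by (simp add: kelems_def distinct_adj_conv_nth)

lemma kelems_Nil [simp]: "[] \<in> kelems"
  by (simp add: kelems_distinct_adj)

lemma kelems_Cons: "x # w \<in> kelems \<longleftrightarrow> w \<in> kelems \<and> (w \<noteq> [] \<longrightarrow> x \<noteq> hd w)"
  by (auto simp: kelems_distinct_adj distinct_adj_Cons)

lemma kpush_kelems: "w \<in> kelems \<Longrightarrow> kpush x w \<in> kelems"
  by (cases x; cases w rule: list.exhaust; cases "hd w") (auto simp: kelems_Cons)

lemma kpush_Cons: "w = [] \<or> hd w \<noteq> x \<Longrightarrow> kpush x w = x # w"
  by (cases x; cases w rule: list.exhaust; cases "hd w") auto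

lemma kpush_E_idem: "kpush E (kpush E y) = kpush E y"
  by (cases y rule: list.exhaust; cases "hd y") auto

lemma kpush_B_involution: "y \<in> kelems \<Longrightarrow> kpush B (kpush B y) = y"
  by (cases y rule: list.exhaust; cases "hd y") (auto simp: kelems_Cons kpush_Cons)

lemma kmul_Nil [simp]: "kmul [] v = v"
  by (simp add: kmul_def)

lemma kmul_Cons [simp]: "kmul (x # u) v = kpush x (kmul u v)"
  by (simp add: kmul_def)

lemma kmul_append: "kmul (u @ u') v = kmul u (kmul u' v)"
  by (simp add: kmul_def)

lemma kmul_kelems: "v \<in> kelems \<Longrightarrow> kmul u v \<in> kelems"
  by (induction u) (auto intro: kpush_kelems)

lemma kmul_kpush:
  assumes "v \<in> kelems" "z \<in> kelems"
  shows "kmul (kpush x v) z = kpush x (kmul v z)"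
proof (cases "v \<noteq> [] \<and> hd v = x")
  case True
  then obtain v' where v: "v = x # v'" by (cases v) auto
  with assms have "kmul v' z \<in> kelems" by (simp add: kelems_Cons kmul_kelems)
  then show ?thesis using v by (cases x) (simp_all add: kpush_E_idem kpush_B_involution)
qed (simp add: kpush_Cons)

lemma kmul_assoc: "v \<in> kelems \<Longrightarrow> w \<in> kelems \<Longrightarrow> kmul (kmul u v) w = kmul u (kmul v w)"
  by (induction u) (simp_all add: kmul_kpush kmul_kelems)

lemma keval_Nil [simp]: "keval \<phi> [] = []"
  by (simp add: keval_def)

lemma keval_Cons [simp]: "keval \<phi> (x # w) = kmul (\<phi> x) (keval \<phi> w)"
  by (simp add: keval_def)

lemma keval_kelems: "keval \<phi> w \<in> kelems"
  by (induction w) (auto intro: kmul_kelems)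

lemma keval_append:
  "\<forall>x. \<phi> x \<in> kelems \<Longrightarrow> keval \<phi> (u @ v) = kmul (keval \<phi> u) (keval \<phi> v)"
  by (induction u) (auto simp: kmul_assoc keval_kelems)

lemma keval_ssubst:
  "\<forall>x. \<phi> x \<in> kelems \<Longrightarrow> keval \<phi> (ssubst \<sigma> w) = keval (\<lambda>z. keval \<phi> (\<sigma> z)) w"
  by (induction w) (simp_all add: ssubst_def keval_append)

lemma K_satD: "K_sat u v \<Longrightarrow> \<forall>x. \<phi> x \<in> kelems \<Longrightarrow> keval \<phi> u = keval \<phi> v"
  unfolding K_sat_def by blast

lemma K_sat_sym: "K_sat s t \<Longrightarrow> K_sat t s"
  by (simp add: K_sat_def)

lemma K_sat_context_ssubst:
  assumes "K_sat s t"
  shows "K_sat (p @ ssubst \<sigma> s @ q) (p @ ssubst \<sigma> t @ q)"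
  unfolding K_sat_def
proof (intro allI impI)
  fix \<phi> :: "nat \<Rightarrow> kletter list"
  assume \<phi>: "\<forall>x. \<phi> x \<in> kelems"
  have "keval (\<lambda>z. keval \<phi> (\<sigma> z)) s = keval (\<lambda>z. keval \<phi> (\<sigma> z)) t"
    using assms by (rule K_satD) (simp add: keval_kelems)
  then show "keval \<phi> (p @ ssubst \<sigma> s @ q) = keval \<phi> (p @ ssubst \<sigma> t @ q)"
    using \<phi> by (simp add: keval_append keval_ssubst)
qed

lemma K_sat_map: "K_sat s t \<Longrightarrow> K_sat (map h s) (map h t)"
  using K_sat_context_ssubst[of s t "[]" "\<lambda>x. [h x]" "[]"]
  by (simp add: ssubst_def map_concat)

lemma keval_filter: "keval \<phi> (filter P w) = keval (\<lambda>x. if P x then \<phi> x else []) w"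
  by (induction w) auto

lemma K_sat_filter: "K_sat s t \<Longrightarrow> K_sat (filter P s) (filter P t)"
  unfolding K_sat_def keval_filter by simp

text \<open>The elements containing \<open>e\<close> are the \<open>knf a m d = b\<^sup>a (eb)\<^sup>m e b\<^sup>d\<close>, with the booleans \<open>a\<close>
and \<open>d\<close> as exponents.\<close>

fun ecore :: "nat \<Rightarrow> kletter list" where
  "ecore 0 = [E]"
| "ecore (Suc m) = E # B # ecore m"

definition bpow :: "bool \<Rightarrow> kletter list" where
  "bpow a = (if a then [B] else [])"

definition knf :: "bool \<Rightarrow> nat \<Rightarrow> bool \<Rightarrow> kletter list" where
  "knf a m d = bpow a @ ecore m @ bpow d"

lemma ecore_eq_E_Cons: "ecore m = E # tl (ecore m)"
  by (cases m) auto

lemma ecore_ne_Nil [simp]: "ecore m \<noteq> []"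
  by (cases m) auto

lemma ecore_append: "ecore m @ r = E # (tl (ecore m) @ r)"
  by (subst ecore_eq_E_Cons) simp

lemma kpush_B_ecore [simp]: "kpush B (ecore m @ r) = B # ecore m @ r"
  by (simp add: ecore_append)

lemma kpush_B_ecore_Nil [simp]: "kpush B (ecore m) = B # ecore m"
  using kpush_B_ecore[of m "[]"] by simp

lemma kpush_E_ecore [simp]: "kpush E (ecore m @ r) = ecore m @ r"
  by (simp add: ecore_append)

lemma kmul_ecore_B: "kmul (ecore m) (B # r) = ecore m @ B # r"
  by (induction m) auto

lemma kmul_ecore_E: "kmul (ecore m) (E # r) = ecore m @ r"
  by (induction m) auto

lemma kmul_ecore_Nil: "kmul (ecore m) [] = ecore m"
  by (induction m) auto

lemma ecore_B_ecore: "ecore m @ B # ecore k = ecore (Suc (m + k))"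
  by (induction m) auto

lemma kmul_ecore_ecore: "kmul (ecore m) (ecore k @ r) = ecore (m + k) @ r"
proof -
  have "kmul (ecore m) (ecore k @ r) = ecore m @ tl (ecore k) @ r"
    by (simp add: ecore_append kmul_ecore_E)
  also have "\<dots> = ecore (m + k) @ r"
    by (cases k) (simp_all add: ecore_B_ecore)
  finally show ?thesis .
qed

lemma kmul_ecore_B_ecore: "kmul (ecore m) (B # ecore k @ r) = ecore (Suc (m + k)) @ r"
  using kmul_ecore_B[of m "ecore k @ r"] ecore_B_ecore[of m k] by simp

lemma kmul_bpow_ecore: "kmul (bpow a) (ecore m @ r) = bpow a @ ecore m @ r"
  by (cases a) (auto simp: bpow_def)

lemma kmul_knf_bpow: "kmul (knf a m d) (bpow g) = knf a m (d \<noteq> g)"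
proof -
  have "kmul (ecore m) (kmul (bpow d) (bpow g)) = ecore m @ bpow (d \<noteq> g)"
    by (cases d; cases g) (simp_all add: bpow_def kmul_ecore_Nil kmul_ecore_B[of m "[]", simplified])
  then show ?thesis
    using kmul_bpow_ecore[of a m "bpow (d \<noteq> g)"] by (simp add: knf_def kmul_append)
qed

lemma kmul_knf_Nil: "kmul (knf a m d) [] = knf a m d"
  using kmul_knf_bpow[of a m d False] by (simp add: bpow_def)

lemma kmul_knf_B: "kmul (knf a m d) [B] = knf a m (\<not> d)"
  using kmul_knf_bpow[of a m d True] by (simp add: bpow_def)

lemma kmul_knf: "kmul (knf a m d) (knf g k f) = knf a (m + k + (if d = g then 0 else 1)) f"
proof -
  have "kmul (ecore m) (kmul (bpow d) (knf g k f)) = ecore (m + k + (if d = g then 0 else 1)) @ bpow f"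
    by (cases d; cases g)
      (simp_all add: knf_def bpow_def kmul_ecore_ecore kmul_ecore_B_ecore)
  then show ?thesis
    by (simp add: knf_def kmul_append kmul_bpow_ecore)
qed

lemma kpush_B_knf [simp]: "kpush B (knf a m d) = knf (\<not> a) m d"
  by (cases a) (auto simp: knf_def bpow_def)

lemma E_in_knf: "E \<in> set (knf a m d)"
  by (simp add: knf_def ecore_append)

lemma knf_ne_Nil: "knf a m d \<noteq> []"
  by (simp add: knf_def)

lemma hd_knf: "hd (knf a m d) = (if a then B else E)"
  by (simp add: knf_def bpow_def ecore_append)

lemma kelems_Cons_cases:
  assumes "x # w \<in> kelems" "w = [] \<or> w = [B] \<or> (\<exists>a m d. w = knf a m d)"
  shows "x # w = [B] \<or> (\<exists>a m d. x # w = knf a m d)"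
proof -
  have x: "w \<noteq> [] \<Longrightarrow> x \<noteq> hd w"
    using assms(1) by (simp add: kelems_Cons)
  consider "w = []" | "w = [B]" | a m d where "w = knf a m d"
    using assms(2) by blast
  then show ?thesis
  proof cases
    case 1
    then have "x = B \<or> x # w = knf False 0 False"
      by (cases x) (simp_all add: knf_def bpow_def)
    then show ?thesis using 1 by blast
  next
    case 2
    with x have "x # w = knf False 0 True"
      by (cases x) (simp_all add: knf_def bpow_def)
    then show ?thesis by blast
  next
    case (3 a m d)
    with x hd_knf[of a m d] knf_ne_Nil[of a m d]
    have "x # w = (if a then knf False (Suc m) d else knf True m d)"
      by (cases a; cases x) (simp_all add: knf_def bpow_def)
    then show ?thesis by metis
  qed
qed

lemma kelems_cases:
  assumes "w \<in> kelems"
  obtains "w = []" | "w = [B]" | a m d where "w = knf a m d"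
proof -
  have "w = [] \<or> w = [B] \<or> (\<exists>a m d. w = knf a m d)"
    using assms
  proof (induction w)
    case (Cons x w)
    then have "w \<in> kelems" by (simp add: kelems_Cons)
    with Cons show ?case using kelems_Cons_cases by blast
  qed simp
  then show ?thesis using that by blast
qed

lemma E_in_kmul:
  assumes "A \<in> kelems" "C \<in> kelems"
  shows "E \<in> set (kmul A C) \<longleftrightarrow> E \<in> set A \<or> E \<in> set C"
  using assms(1)
proof (cases rule: kelems_cases)
  case 2
  with assms(2) show ?thesis
    by (cases rule: kelems_cases) (auto simp: E_in_knf)
next
  case (3 g k f)
  with assms(2) show ?thesis
    by (cases rule: kelems_cases) (auto simp: kmul_knf_B kmul_knf_Nil kmul_knf E_in_knf)
qed simp

lemma E_in_keval:
  "\<forall>x. \<phi> x \<in> kelems \<Longrightarrow> E \<in> set (keval \<phi> w) \<longleftrightarrow> (\<exists>x\<in>set w. E \<in> set (\<phi> x))"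
  by (induction w) (auto simp: E_in_kmul keval_kelems)

lemma kelems_without_E: "A \<in> kelems \<Longrightarrow> E \<notin> set A \<Longrightarrow> A = [] \<or> A = [B]"
  by (auto elim: kelems_cases simp: E_in_knf)

lemma keval_units:
  "\<forall>x\<in>set w. \<phi> x = [] \<or> \<phi> x = [B] \<Longrightarrow>
     keval \<phi> w = (if even (length (filter (\<lambda>x. \<phi> x = [B]) w)) then [] else [B])"
  by (induction w) auto

lemma kmul_knf_sandwich:
  assumes "A \<in> kelems"
  obtains c where "\<And>N m. kmul (knf a N d) (kmul A (knf a m d)) = knf a (N + m + c) d"
  using assms
proof (cases rule: kelems_cases)
  case 1
  then show ?thesis by (intro that[of "if d = a then 0 else 1"]) (simp add: kmul_knf)
next
  case 2
  then show ?thesis by (intro that[of "if d = (\<not> a) then 0 else 1"]) (simp add: kmul_knf)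
next
  case (3 g k f)
  then show ?thesis
    by (intro that[of "k + (if d = g then 0 else 1) + (if f = a then 0 else 1)"])
      (simp add: kmul_knf ac_simps)
qed

lemma kmul_knf_swap_middle:
  assumes "X = knf a m d" "A \<in> kelems" "C \<in> kelems"
  shows "kmul X (kmul A (kmul X (kmul C X))) = kmul X (kmul C (kmul X (kmul A X)))"
proof -
  obtain cA where "\<And>N M. kmul (knf a N d) (kmul A (knf a M d)) = knf a (N + M + cA) d"
    using kmul_knf_sandwich[where a = a and d = d, OF assms(2)] by blast
  moreover obtain cC where "\<And>N M. kmul (knf a N d) (kmul C (knf a M d)) = knf a (N + M + cC) d"
    using kmul_knf_sandwich[where a = a and d = d, OF assms(3)] by blast
  ultimately show ?thesis using assms(1) by (simp add: ac_simps)
qed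

lemma keval_count_list:
  "keval (\<lambda>y. if y = x then [E, B] else []) w = concat (replicate (count_list w x) [E, B])"
proof (induction w)
  case (Cons y w)
  then show ?case by (cases "count_list w x") auto
qed simp

lemma K_sat_count_list: "K_sat u v \<Longrightarrow> count_list u x = count_list v x"
proof -
  assume "K_sat u v"
  then have "keval (\<lambda>y. if y = x then [E, B] else []) u = keval (\<lambda>y. if y = x then [E, B] else []) v"
    by (rule K_satD) (simp add: kelems_Cons)
  then have "length (concat (replicate (count_list u x) [E, B])) =
             length (concat (replicate (count_list v x) [E, B]))"
    by (simp only: keval_count_list)
  then show ?thesis by (simp add: length_concat sum_list_replicate)
qed

lemma K_sat_probes:
  assumes "K_sat u v" "\<forall>\<phi>\<in>set \<Phi>. \<forall>x. \<phi> x \<in> kelems"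
  shows "\<forall>\<phi>\<in>set \<Phi>. keval \<phi> v = keval \<phi> u"
  using K_satD[OF K_sat_sym[OF assms(1)]] assms(2) by blast

lemma K_sat_mset: "K_sat u v \<Longrightarrow> mset u = mset v"
  by (rule multiset_eqI) (simp add: count_mset K_sat_count_list)

lemma K_sat_set: "K_sat u v \<Longrightarrow> set u = set v"
  by (metis K_sat_mset set_mset_mset)

lemma K_sat_map_inj_on:
  assumes f: "inj_on f (set u)" and uv: "K_sat (map f u) v"
  obtains v' where "K_sat u v'" "v = map f v'"
proof
  define g where "g = the_inv_into (set u) f"
  have "map g (map f u) = u"
    using f by (simp add: map_idI g_def the_inv_into_f_f)
  then show "K_sat u (map g v)"
    using K_sat_map[OF uv, of g] by simp
  have "set v = f ` set u"
    using K_sat_set[OF uv] by simp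
  then have "map f (map g v) = v"
    using f unfolding map_map by (intro map_idI) (auto simp: g_def f_the_inv_into_f)
  then show "v = map f (map g v)" ..
qed

section \<open>The identities \<open>u\<^sub>n \<approx> v\<^sub>n\<close>\<close>

definition u_word :: "nat \<Rightarrow> sword" where
  "u_word n = [0..<n] @ rev [0..<n] @ [0..<n] @ [0..<n]"

definition v_word :: "nat \<Rightarrow> sword" where
  "v_word n = [0..<n] @ [0..<n] @ rev [0..<n] @ [0..<n]"

lemma K_sat_u_v_word: "K_sat (u_word n) (v_word n)"
  unfolding K_sat_def
proof (intro allI impI)
  fix \<phi> :: "nat \<Rightarrow> kletter list"
  assume \<phi>: "\<forall>x. \<phi> x \<in> kelems"
  define X where "X = keval \<phi> [0..<n]"
  define Y where "Y = keval \<phi> (rev [0..<n])"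
  have XY: "X \<in> kelems" "Y \<in> kelems"
    unfolding X_def Y_def by (simp_all add: keval_kelems)
  have "kmul X (kmul Y (kmul X X)) = kmul X (kmul X (kmul Y X))"
  proof (cases "E \<in> set X")
    case True
    then obtain a m d where "X = knf a m d"
      using XY(1) by (auto elim: kelems_cases)
    from kmul_knf_swap_middle[OF this XY(2) kelems_Nil] show ?thesis by simp
  next
    case False
    then have "\<forall>x\<in>set [0..<n]. \<phi> x = [] \<or> \<phi> x = [B]"
      using E_in_keval[OF \<phi>] \<phi> kelems_without_E unfolding X_def by blast
    then have "Y = X"
      unfolding X_def Y_def by (simp add: keval_units rev_filter[symmetric])
    then show ?thesis by simp
  qed
  then show "keval \<phi> (u_word n) = keval \<phi> (v_word n)"
    using \<phi> by (simp add: u_word_def v_word_def keval_append X_def Y_def)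
qed

lemma u_word_neq_v_word: "2 \<le> n \<Longrightarrow> u_word n \<noteq> v_word n"
proof
  assume n: "2 \<le> n" and eq: "u_word n = v_word n"
  have "u_word n ! n = n - 1" "v_word n ! n = 0"
    using n by (simp_all add: u_word_def v_word_def nth_append rev_nth)
  with eq n show False by simp
qed

section \<open>Two- and three-letter words\<close>

definition proj :: "nat set \<Rightarrow> sword \<Rightarrow> sword" where
  "proj X w = filter (\<lambda>x. x \<in> X) w"

lemma proj_append: "proj X (u @ v) = proj X u @ proj X v"
  by (simp add: proj_def)

lemma proj_rev: "proj X (rev w) = rev (proj X w)"
  by (simp add: proj_def rev_filter)

lemma proj_proj: "X \<subseteq> Y \<Longrightarrow> proj X (proj Y w) = proj X w"
  by (auto simp: proj_def intro: filter_cong)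

lemma proj_ssubst: "proj X (ssubst \<sigma> s) = concat (map (\<lambda>z. proj X (\<sigma> z)) s)"
  by (induction s) (auto simp: ssubst_def proj_def)

lemma K_sat_proj: "K_sat u v \<Longrightarrow> K_sat (proj X u) (proj X v)"
  unfolding proj_def by (rule K_sat_filter)

lemma proj_upt:
  assumes "sorted ys" "distinct ys" "set ys = X \<inter> {0..<n}"
  shows "proj X [0..<n] = ys"
proof (rule sorted_distinct_set_unique)
  show "sorted (proj X [0..<n])"
    unfolding proj_def by (rule sorted_wrt_filter) (rule sorted_upt)
  show "distinct (proj X [0..<n])"
    unfolding proj_def by (rule distinct_filter) (rule distinct_upt)
  show "set (proj X [0..<n]) = set ys"
    using assms(3) unfolding proj_def set_filter set_upt by blast
qed (fact assms)+

text \<open>\<open>u2\<close>, \<open>v2\<close>, \<open>u3\<close> and \<open>v3\<close> are the projections of \<open>u\<^sub>n\<close> and \<open>v\<^sub>n\<close> to two and to three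
letters.\<close>

definition u2 :: sword where
  "u2 = [0, 1, 1, 0, 0, 1, 0, 1]"

definition v2 :: sword where
  "v2 = [0, 1, 0, 1, 1, 0, 0, 1]"

text \<open>The probes rule out every rearrangement of \<open>u2\<close> outside \<open>u2_class\<close>.\<close>

definition u2_class :: "sword list" where
  "u2_class = [[0, 1, 1, 0, 0, 1, 0, 1], [0, 1, 0, 0, 1, 1, 0, 1],
               [0, 1, 0, 1, 1, 0, 0, 1], [0, 1, 1, 0, 1, 0, 0, 1]]"

definition u2_probes :: "(nat \<Rightarrow> kletter list) list" where
  "u2_probes = [\<lambda>x. if x = 0 then [E] else [B, E, B], \<lambda>x. if x = 0 then [B] else [E],
                \<lambda>x. if x = 0 then [E] else [B]]"

lemma u2_class_computation:
  "\<forall>v\<in>set (List.n_lists 8 [0, 1]).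
     (\<forall>\<phi>\<in>set u2_probes. keval \<phi> v = keval \<phi> u2) \<longrightarrow> v \<in> set u2_class"
  by code_simp

lemma K_sat_u2: "K_sat u2 v \<Longrightarrow> v \<in> set u2_class"
proof -
  assume uv: "K_sat u2 v"
  have "mset v = mset u2"
    using K_sat_mset[OF uv] by simp
  then have "length v = length u2" "set v = set u2"
    by (metis size_mset, metis set_mset_mset)
  then have "v \<in> set (List.n_lists 8 [0, 1])"
    by (simp add: set_n_lists u2_def)
  moreover have "\<forall>\<phi>\<in>set u2_probes. keval \<phi> v = keval \<phi> u2"
    using uv by (rule K_sat_probes) (simp add: u2_probes_def kelems_Cons)
  ultimately show ?thesis
    using u2_class_computation by blast
qed

lemma K_sat_renamed_u2:
  assumes "a \<noteq> b" "K_sat (map ((!) [a, b]) u2) v"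
  shows "v \<in> map ((!) [a, b]) ` set u2_class"
proof -
  have "inj_on ((!) [a, b]) (set u2)"
    using assms(1) by (auto simp: u2_def)
  then obtain v' where "K_sat u2 v'" "v = map ((!) [a, b]) v'"
    using assms(2) by (rule K_sat_map_inj_on)
  then show ?thesis
    using K_sat_u2 by blast
qed

function merge3 :: "nat \<Rightarrow> nat \<Rightarrow> nat \<Rightarrow> sword \<Rightarrow> sword \<Rightarrow> sword \<Rightarrow> sword" where
  "merge3 a b c xs ys zs =
    (if xs \<noteq> [] \<and> ys \<noteq> [] \<and> hd xs = a \<and> hd ys = a then a # merge3 a b c (tl xs) (tl ys) zs
     else if xs \<noteq> [] \<and> zs \<noteq> [] \<and> hd xs = b \<and> hd zs = b then b # merge3 a b c (tl xs) ys (tl zs)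
     else if ys \<noteq> [] \<and> zs \<noteq> [] \<and> hd ys = c \<and> hd zs = c then c # merge3 a b c xs (tl ys) (tl zs)
     else [])"
  by pat_completeness auto
termination
  by (relation "measure (\<lambda>(a, b, c, xs, ys, zs). length xs + length ys + length zs)")
    (auto simp: neq_Nil_conv)

declare merge3.simps [simp del]

lemma merge3_proj:
  assumes "a \<noteq> b" "a \<noteq> c" "b \<noteq> c" "set v \<subseteq> {a, b, c}"
  shows "merge3 a b c (proj {a, b} v) (proj {a, c} v) (proj {b, c} v) = v"
  using assms(4)
proof (induction v)
  case Nil
  then show ?case by (simp add: proj_def merge3.simps)
next
  case (Cons x v)
  then have "x = a \<or> x = b \<or> x = c" "set v \<subseteq> {a, b, c}" by auto
  then show ?case
    using assms(1-3) Cons.IH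
    by (elim disjE; subst merge3.simps; cases "filter (\<lambda>y. y = a \<or> y = c) v";
        cases "filter (\<lambda>y. y = a \<or> y = b) v") (simp_all add: proj_def)
qed

text \<open>A word equivalent to \<open>u3\<close> is the merge of three renamed members of \<open>u2_class\<close>; two probes
exclude all such merges except \<open>u3\<close> and \<open>v3\<close>.\<close>

definition u3 :: sword where
  "u3 = [0, 1, 2, 2, 1, 0, 0, 1, 2, 0, 1, 2]"

definition v3 :: sword where
  "v3 = [0, 1, 2, 0, 1, 2, 2, 1, 0, 0, 1, 2]"

definition u3_probes :: "(nat \<Rightarrow> kletter list) list" where
  "u3_probes = [\<lambda>x. if x = 1 then [E] else [B],
                \<lambda>x. if x = 0 then [E] else if x = 1 then [B, E] else [B, E, B]]"

lemma u3_computation: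
  "\<forall>x\<in>set (map (map ((!) [0, 1])) u2_class). \<forall>y\<in>set (map (map ((!) [0, 2])) u2_class).
   \<forall>z\<in>set (map (map ((!) [1, 2])) u2_class).
     proj {0, 1} (merge3 0 1 2 x y z) = x \<and> proj {0, 2} (merge3 0 1 2 x y z) = y \<and>
     proj {1, 2} (merge3 0 1 2 x y z) = z \<and>
     (\<forall>\<phi>\<in>set u3_probes. keval \<phi> (merge3 0 1 2 x y z) = keval \<phi> u3)
     \<longrightarrow> merge3 0 1 2 x y z = u3 \<or> merge3 0 1 2 x y z = v3"
  by code_simp

lemma K_sat_u3:
  assumes uv: "K_sat u3 v"
  shows "v = u3 \<or> v = v3"
proof -
  have pair: "proj {a, b} v \<in> set (map (map ((!) [a, b])) u2_class)"
    if "a \<noteq> b" "proj {a, b} u3 = map ((!) [a, b]) u2" for a b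
  proof -
    have "K_sat (map ((!) [a, b]) u2) (proj {a, b} v)"
      using K_sat_proj[OF uv, of "{a, b}"] that(2) by simp
    then show ?thesis
      using K_sat_renamed_u2[OF that(1)] by simp
  qed
  have "set v = set u3"
    using K_sat_set[OF uv] by simp
  then have "set v \<subseteq> {0, 1, 2}"
    by (simp add: u3_def)
  then have merge: "merge3 0 1 2 (proj {0, 1} v) (proj {0, 2} v) (proj {1, 2} v) = v"
    by (simp add: merge3_proj)
  have probes: "\<forall>\<phi>\<in>set u3_probes. keval \<phi> v = keval \<phi> u3"
    using uv by (rule K_sat_probes) (simp add: u3_probes_def kelems_Cons)
  have "proj {0, 1} v \<in> set (map (map ((!) [0, 1])) u2_class)"
    "proj {0, 2} v \<in> set (map (map ((!) [0, 2])) u2_class)"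
    "proj {1, 2} v \<in> set (map (map ((!) [1, 2])) u2_class)"
    by (rule pair; simp add: u2_def u3_def proj_def)+
  from u3_computation[THEN bspec, OF this(1), THEN bspec, OF this(2), THEN bspec, OF this(3)]
  show ?thesis
    unfolding merge using probes by simp
qed

lemma K_sat_renamed_u3:
  assumes "distinct [a, b, c]" "K_sat (map ((!) [a, b, c]) u3) v"
  shows "v = map ((!) [a, b, c]) u3 \<or> v = map ((!) [a, b, c]) v3"
proof -
  have "inj_on ((!) [a, b, c]) (set u3)"
    using assms(1) by (auto simp: u3_def)
  then obtain v' where "K_sat u3 v'" "v = map ((!) [a, b, c]) v'"
    using assms(2) by (rule K_sat_map_inj_on)
  then show ?thesis
    using K_sat_u3 by blast
qed

lemma proj_u_v_word_pair:
  assumes "i < j" "j < n"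
  shows "proj {i, j} (u_word n) = map ((!) [i, j]) u2" "proj {i, j} (v_word n) = map ((!) [i, j]) v2"
proof -
  have "proj {i, j} [0..<n] = [i, j]"
    using assms by (intro proj_upt) auto
  then show "proj {i, j} (u_word n) = map ((!) [i, j]) u2" "proj {i, j} (v_word n) = map ((!) [i, j]) v2"
    by (simp_all add: u_word_def v_word_def proj_append proj_rev u2_def v2_def)
qed

lemma proj_u_v_word_triple:
  assumes "i < j" "j < k" "k < n"
  shows "proj {i, j, k} (u_word n) = map ((!) [i, j, k]) u3"
    "proj {i, j, k} (v_word n) = map ((!) [i, j, k]) v3"
proof -
  have "proj {i, j, k} [0..<n] = [i, j, k]"
    using assms by (intro proj_upt) auto
  then show "proj {i, j, k} (u_word n) = map ((!) [i, j, k]) u3"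
    "proj {i, j, k} (v_word n) = map ((!) [i, j, k]) v3"
    by (simp_all add: u_word_def v_word_def proj_append proj_rev u3_def v3_def)
qed

section \<open>Blocks of a substitution instance\<close>

definition kprod :: "kletter list list \<Rightarrow> kletter list" where
  "kprod L = foldr kmul L []"

definition block_equiv :: "sword list \<Rightarrow> sword list \<Rightarrow> bool" where
  "block_equiv Bs Bt \<longleftrightarrow>
     (\<forall>F. (\<forall>w. F w \<in> kelems) \<longrightarrow> F [] = [] \<longrightarrow> kprod (map F Bs) = kprod (map F Bt))"

lemma kprod_kelems: "kprod L \<in> kelems"
  unfolding kprod_def by (induction L) (auto intro: kmul_kelems)

lemma K_sat_block_equiv:
  assumes "K_sat s t"
  shows "block_equiv (map \<tau> s) (map \<tau> t)"
  unfolding block_equiv_def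
proof (intro allI impI)
  fix F :: "sword \<Rightarrow> kletter list"
  assume "\<forall>w. F w \<in> kelems"
  then have "keval (F \<circ> \<tau>) s = keval (F \<circ> \<tau>) t"
    using assms by (intro K_satD) auto
  moreover have "keval (F \<circ> \<tau>) w = kprod (map F (map \<tau> w))" for w
    by (induction w) (simp_all add: kprod_def)
  ultimately show "kprod (map F (map \<tau> s)) = kprod (map F (map \<tau> t))"
    by simp
qed

lemma kprod_filter_Nil: "F [] = [] \<Longrightarrow> kprod (map F (filter (\<lambda>bk. bk \<noteq> []) L)) = kprod (map F L)"
  by (induction L) (auto simp: kprod_def)

lemma block_equiv_filter_Nil:
  "block_equiv Bs Bt \<Longrightarrow> block_equiv (filter (\<lambda>bk. bk \<noteq> []) Bs) (filter (\<lambda>bk. bk \<noteq> []) Bt)"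
  unfolding block_equiv_def by (simp add: kprod_filter_Nil)

lemma block_equiv_map: "block_equiv Bs Bt \<Longrightarrow> block_equiv (map (map g) Bs) (map (map g) Bt)"
  unfolding block_equiv_def by (simp add: comp_def)

lemma E_in_kprod:
  "\<forall>x\<in>set L. x \<in> kelems \<Longrightarrow> E \<in> set (kprod L) \<longleftrightarrow> (\<exists>x\<in>set L. E \<in> set x)"
proof (induction L)
  case (Cons x L)
  then show ?case
    using kprod_kelems[of L] by (simp add: kprod_def E_in_kmul)
qed (simp add: kprod_def)

lemma block_equiv_set:
  assumes "block_equiv Bs Bt" "[] \<notin> set Bt"
  shows "set Bt \<subseteq> set Bs"
proof
  fix C assume C: "C \<in> set Bt"
  define F where "F w = (if w = C then [E] else [])" for w
  have "\<forall>w. F w \<in> kelems" "F [] = []"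
    using C assms(2) by (auto simp: F_def kelems_Cons)
  then have "kprod (map F Bs) = kprod (map F Bt)"
    using assms(1) unfolding block_equiv_def by blast
  moreover have "\<forall>x\<in>set (map F Bs). x \<in> kelems" "\<forall>x\<in>set (map F Bt). x \<in> kelems"
    using \<open>\<forall>w. F w \<in> kelems\<close> by auto
  ultimately have "(\<exists>x\<in>set (map F Bs). E \<in> set x) \<longleftrightarrow> (\<exists>x\<in>set (map F Bt). E \<in> set x)"
    using E_in_kprod by metis
  then show "C \<in> set Bs"
    using C by (auto simp: F_def split: if_splits)
qed

text \<open>\<open>splittings w\<close> lists all ways of cutting \<open>w\<close> into nonempty consecutive blocks, and
\<open>factorisations bl w\<close> all ways of writing \<open>w\<close> as a product of nonempty words from \<open>bl\<close>.\<close>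

fun splittings :: "'a list \<Rightarrow> 'a list list list" where
  "splittings [] = [[]]"
| "splittings (x # xs) = concat (map (\<lambda>d. case d of [] \<Rightarrow> [[[x]]]
      | b # bs \<Rightarrow> [[x] # b # bs, (x # b) # bs]) (splittings xs))"

lemma splittings_complete: "concat Bs = w \<Longrightarrow> [] \<notin> set Bs \<Longrightarrow> Bs \<in> set (splittings w)"
proof (induction w arbitrary: Bs)
  case Nil
  then show ?case by (cases Bs) auto
next
  case (Cons x xs)
  define extend where "extend d = (case d of [] \<Rightarrow> [[[x]]] | b # bs \<Rightarrow> [[x] # b # bs, (x # b) # bs])"
    for d :: "'a list list"
  have mem: "d \<in> set (splittings xs) \<Longrightarrow> Bs \<in> set (extend d) \<Longrightarrow> Bs \<in> set (splittings (x # xs))" for d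
    by (auto simp: extend_def)
  obtain b1 rest where Bs: "Bs = (x # b1) # rest"
    using Cons.prems by (cases Bs rule: list.exhaust; cases "hd Bs") auto
  show ?case
  proof (cases "b1 = []")
    case True
    then have "rest \<in> set (splittings xs)"
      using Cons Bs by auto
    moreover have "Bs \<in> set (extend rest)"
      using Bs True by (cases rest) (auto simp: extend_def)
    ultimately show ?thesis by (rule mem)
  next
    case False
    then have "b1 # rest \<in> set (splittings xs)"
      using Cons.prems Bs by (intro Cons.IH) auto
    moreover have "Bs \<in> set (extend (b1 # rest))"
      using Bs by (simp add: extend_def)
    ultimately show ?thesis by (rule mem)
  qed
qed

function factorisations :: "'a list list \<Rightarrow> 'a list \<Rightarrow> 'a list list list" where
  "factorisations bl w = (if w = [] then [[]] else
     concat (map (\<lambda>b. if b \<noteq> [] \<and> take (length b) w = b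
                       then map (Cons b) (factorisations bl (drop (length b) w)) else []) bl))"
  by pat_completeness auto
termination
  by (relation "measure (\<lambda>(bl, w). length w)") auto

declare factorisations.simps [simp del]

lemma factorisations_complete:
  "concat Bt = w \<Longrightarrow> [] \<notin> set Bt \<Longrightarrow> set Bt \<subseteq> set bl \<Longrightarrow> Bt \<in> set (factorisations bl w)"
proof (induction Bt arbitrary: w)
  case Nil
  then show ?case by (simp add: factorisations.simps)
next
  case (Cons b rest)
  then have "w = b @ concat rest" "b \<noteq> []" "b \<in> set bl" "rest \<in> set (factorisations bl (concat rest))"
    by auto
  then show ?case by (subst factorisations.simps) force
qed

definition block_shape :: "sword \<Rightarrow> nat" where
  "block_shape bk = (if hd bk = 1 then 4 else 0) + (if last bk = 1 then 2 else 0) + (if 3 \<le> length bk then 1 else 0)"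

definition block_value :: "kletter list \<Rightarrow> kletter list \<Rightarrow> kletter list list \<Rightarrow> sword \<Rightarrow> kletter list" where
  "block_value p0 p1 X bk =
     (if bk = [] then [] else if length bk = 1 then (if hd bk = 0 then p0 else p1) else X ! block_shape bk)"

definition block_marker :: "kletter list \<Rightarrow> sword \<Rightarrow> sword \<Rightarrow> kletter list" where
  "block_marker m c bk = (if bk = [] then [] else if bk = c then m else [E])"

definition block_probes :: "sword list \<Rightarrow> (sword \<Rightarrow> kletter list) list" where
  "block_probes Bs =
     [block_value [E, B] [B] [[E], [E], [B], [B], [B, E], [B, E], [E, B], [E, B]],
      block_value [] [B] (replicate 8 [E, B]),
      block_value [] [] [[], [], [], [], [B], [E], [], []],
      block_marker [B, E] (hd Bs), block_marker [E, B] (last Bs)]"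

lemma block_value_kelems:
  assumes "set X \<subseteq> kelems" "length X = 8" "p0 \<in> kelems" "p1 \<in> kelems"
  shows "block_value p0 p1 X w \<in> kelems"
proof -
  have "block_shape w < length X"
    using assms(2) by (simp add: block_shape_def)
  then show ?thesis
    using assms nth_mem by (auto simp: block_value_def)
qed

lemma block_probes_kelems: "F \<in> set (block_probes Bs) \<Longrightarrow> F [] = [] \<and> (\<forall>w. F w \<in> kelems)"
  by (auto simp: block_probes_def block_marker_def kelems_Cons intro!: block_value_kelems)
    (auto simp: block_value_def)

text \<open>No identity of \<open>K\<^sub>\<infinity>\<close> rewrites \<open>u2\<close> to \<open>v2\<close> with a block of length at least two.\<close>

lemma block_computation:
  "\<forall>i\<in>set [0..<9]. \<forall>j\<in>set [0..<9].
     i + j \<le> 8 \<and> take i u2 = take i v2 \<and> drop (8 - j) u2 = drop (8 - j) v2 \<longrightarrow>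
     (\<forall>Bs\<in>set (splittings (drop i (take (8 - j) u2))).
      \<forall>Bt\<in>set (factorisations (remdups Bs) (drop i (take (8 - j) v2))).
        (\<exists>bk\<in>set Bs. 2 \<le> length bk) \<longrightarrow> (\<exists>F\<in>set (block_probes Bs). kprod (map F Bs) \<noteq> kprod (map F Bt)))"
  by code_simp

lemma append_eq_take_drop:
  assumes "p @ w @ q = W"
  shows "p = take (length p) W" "w = drop (length p) (take (length W - length q) W)"
    "q = drop (length W - length q) W" "length p + length q \<le> length W"
  using assms[symmetric] by simp_all

lemma block_equiv_u2_v2:
  assumes u: "p @ concat Bs @ q = u2" and v: "p @ concat Bt @ q = v2" and eq: "block_equiv Bs Bt"
  shows "\<forall>bk\<in>set Bs. length bk \<le> 1"
proof (rule ccontr)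
  assume "\<not> (\<forall>bk\<in>set Bs. length bk \<le> 1)"
  then obtain bk where bk: "bk \<in> set Bs" "2 \<le> length bk"
    by force
  define Bs' where "Bs' = filter (\<lambda>bk. bk \<noteq> []) Bs"
  define Bt' where "Bt' = filter (\<lambda>bk. bk \<noteq> []) Bt"
  have eq': "block_equiv Bs' Bt'"
    unfolding Bs'_def Bt'_def by (rule block_equiv_filter_Nil[OF eq])
  have ne: "[] \<notin> set Bs'" "[] \<notin> set Bt'"
    unfolding Bs'_def Bt'_def by auto
  have "concat (filter (\<lambda>bk. bk \<noteq> []) L) = concat L" for L :: "sword list"
    by (induction L) auto
  then have concat: "concat Bs' = concat Bs" "concat Bt' = concat Bt"
    unfolding Bs'_def Bt'_def by simp_all
  define i where "i = length p"
  define j where "j = length q"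
  have "length u2 = 8" "length v2 = 8"
    by (simp_all add: u2_def v2_def)
  then have ij: "i + j \<le> 8" "take i u2 = take i v2" "drop (8 - j) u2 = drop (8 - j) v2"
    and Bs_mid: "concat Bs = drop i (take (8 - j) u2)" and Bt_mid: "concat Bt = drop i (take (8 - j) v2)"
    using append_eq_take_drop[OF u] append_eq_take_drop[OF v] unfolding i_def j_def by metis+
  have "Bs' \<in> set (splittings (drop i (take (8 - j) u2)))"
    using splittings_complete[OF _ ne(1)] concat Bs_mid by simp
  moreover have "set Bt' \<subseteq> set (remdups Bs')"
    using block_equiv_set[OF eq' ne(2)] by simp
  then have "Bt' \<in> set (factorisations (remdups Bs') (drop i (take (8 - j) v2)))"
    using factorisations_complete[OF _ ne(2)] concat Bt_mid by simp
  moreover have "\<exists>bk\<in>set Bs'. 2 \<le> length bk"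
    using bk unfolding Bs'_def by auto
  moreover have "i \<in> set [0..<9]" "j \<in> set [0..<9]"
    using ij(1) by auto
  ultimately obtain F where "F \<in> set (block_probes Bs')" "kprod (map F Bs') \<noteq> kprod (map F Bt')"
    using block_computation ij by blast
  with eq' block_probes_kelems show False
    unfolding block_equiv_def by blast
qed

lemma block_equiv_renamed_u2_v2:
  assumes "a \<noteq> b" "p @ concat Bs @ q = map ((!) [a, b]) u2" "p @ concat Bt @ q = map ((!) [a, b]) v2"
    "block_equiv Bs Bt"
  shows "\<forall>bk\<in>set Bs. length bk \<le> 1"
proof -
  define g where "g x = (if x = a then 0 else 1 :: nat)" for x
  have "map g (map ((!) [a, b]) u2) = u2" "map g (map ((!) [a, b]) v2) = v2"
    using assms(1) by (simp_all add: u2_def v2_def g_def)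
  then have "map g p @ concat (map (map g) Bs) @ map g q = u2"
    "map g p @ concat (map (map g) Bt) @ map g q = v2"
    using arg_cong[OF assms(2), of "map g"] arg_cong[OF assms(3), of "map g"] by (simp_all add: map_concat)
  then have "\<forall>bk\<in>set (map (map g) Bs). length bk \<le> 1"
    using block_equiv_u2_v2 block_equiv_map[OF assms(4)] by blast
  then show ?thesis by simp
qed

section \<open>Words equivalent to \<open>u\<^sub>n\<close>\<close>

definition agrees_on :: "sword \<Rightarrow> sword \<Rightarrow> nat set \<Rightarrow> bool" where
  "agrees_on u w X \<longleftrightarrow> (\<forall>x\<in>X. \<forall>y\<in>X. x \<noteq> y \<longrightarrow> proj {x, y} w = proj {x, y} u)"

lemma eq_if_agrees_on:
  assumes "set v \<subseteq> A" "set w \<subseteq> A" "\<forall>a\<in>A. \<exists>b\<in>A. b \<noteq> a" "agrees_on w v A"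
  shows "v = w"
  using assms
proof (induction v arbitrary: w)
  case Nil
  show ?case
  proof (cases w)
    case (Cons y w')
    with Nil obtain y' where "y \<in> A" "y' \<in> A" "y' \<noteq> y"
      by auto
    with Nil.prems(4) have "proj {y, y'} [] = proj {y, y'} w"
      by (auto simp: agrees_on_def)
    then show ?thesis using Cons by (simp add: proj_def)
  qed simp
next
  case (Cons x v)
  have xA: "x \<in> A"
    using Cons.prems(1) by simp
  have pair: "proj {a, b} (x # v) = proj {a, b} w" if "a \<in> A" "b \<in> A" "a \<noteq> b" for a b
    using Cons.prems(4) that by (auto simp: agrees_on_def)
  obtain y w' where w: "w = y # w'"
  proof (cases w)
    case Nil
    obtain x' where "x' \<in> A" "x' \<noteq> x"
      using Cons.prems(3) xA by blast
    with pair[of x x'] xA Nil show ?thesis by (simp add: proj_def)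
  qed
  have "x = y"
  proof (rule ccontr)
    assume "x \<noteq> y"
    moreover have "y \<in> A"
      using Cons.prems(2) w by simp
    ultimately show False
      using pair[of x y] xA w by (simp add: proj_def)
  qed
  have "agrees_on w' v A"
    unfolding agrees_on_def
  proof (intro ballI impI)
    fix a b assume "a \<in> A" "b \<in> A" "a \<noteq> b"
    then show "proj {a, b} v = proj {a, b} w'"
      using pair[of a b] w \<open>x = y\<close> by (auto simp: proj_def split: if_splits)
  qed
  then show ?case
    using Cons w \<open>x = y\<close> by simp
qed

lemma u_word_pair_neq_v_word_pair:
  assumes "a \<noteq> b" "a < n" "b < n"
  shows "proj {a, b} (u_word n) \<noteq> proj {a, b} (v_word n)"
proof -
  have "proj {i, j} (u_word n) \<noteq> proj {i, j} (v_word n)" if "i < j" "j < n" for i j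
    using proj_u_v_word_pair[OF that] that(1) by (simp add: u2_def v2_def)
  from this[of a b] this[of b a] assms show ?thesis
    by (cases "a < b") (auto simp: insert_commute)
qed

lemma K_sat_u_word_triple:
  assumes w: "K_sat (u_word n) w" and X: "X \<subseteq> {..<n}" "card X = 3"
  shows "agrees_on (u_word n) w X \<or> agrees_on (v_word n) w X"
proof -
  have "finite X"
    using X(2) card.infinite by fastforce
  have "length (sorted_list_of_set X) = Suc (Suc (Suc 0))"
    using X(2) by simp
  then obtain i j k where ijk: "sorted_list_of_set X = [i, j, k]"
    by (metis length_0_conv length_Suc_conv)
  then have "i < j" "j < k" and X_eq: "X = {i, j, k}"
    using strict_sorted_list_of_set[of X] set_sorted_list_of_set[OF \<open>finite X\<close>] by auto
  with X(1) have "k < n" by auto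
  note proj_X = proj_u_v_word_triple[OF \<open>i < j\<close> \<open>j < k\<close> this, folded X_eq]
  have "K_sat (map ((!) [i, j, k]) u3) (proj X w)"
    using K_sat_proj[OF w, of X] proj_X(1) by simp
  with \<open>i < j\<close> \<open>j < k\<close> have "proj X w = map ((!) [i, j, k]) u3 \<or> proj X w = map ((!) [i, j, k]) v3"
    by (intro K_sat_renamed_u3) auto
  then have "proj X w = proj X (u_word n) \<or> proj X w = proj X (v_word n)"
    unfolding proj_X .
  moreover have "agrees_on U w X" if "proj X w = proj X U" for U
    unfolding agrees_on_def
  proof (intro ballI impI)
    fix x y assume "x \<in> X" "y \<in> X"
    then have "proj {x, y} (proj X w) = proj {x, y} w" "proj {x, y} (proj X U) = proj {x, y} U"
      by (simp_all add: proj_proj)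
    with that show "proj {x, y} w = proj {x, y} U" by simp
  qed
  ultimately show ?thesis by blast
qed

lemma K_sat_u_word_cases:
  assumes w: "K_sat (u_word n) w" and n: "3 \<le> n"
  shows "agrees_on (u_word n) w {..<n} \<or> agrees_on (v_word n) w {..<n}"
proof (cases "agrees_on (u_word n) w {..<n}")
  case False
  then obtain i j where ij: "i < n" "j < n" "i \<noteq> j" "proj {i, j} w \<noteq> proj {i, j} (u_word n)"
    by (auto simp: agrees_on_def)
  have triple: "agrees_on (v_word n) w {a, b, c}"
    if "a < n" "b < n" "c < n" "distinct [a, b, c]" "proj {a, b} w \<noteq> proj {a, b} (u_word n)" for a b c
  proof -
    have "\<not> agrees_on (u_word n) w {a, b, c}"
      using that by (auto simp: agrees_on_def)
    moreover have "card {a, b, c} = 3"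
      using that(4) by simp
    ultimately show ?thesis
      using K_sat_u_word_triple[OF w, of "{a, b, c}"] that(1-3) by auto
  qed
  have from_i: "proj {i, k} w = proj {i, k} (v_word n)" if "k < n" "k \<noteq> i" for k
  proof -
    have "\<exists>c\<in>{0, 1, 2 :: nat}. c \<noteq> i \<and> c \<noteq> j"
      by auto
    then obtain c where c: "c \<in> {0, 1, 2}" "c \<noteq> i" "c \<noteq> j"
      by blast
    define d where "d = (if k = j then c else k)"
    have "d < n" "distinct [i, j, d]" "k \<in> {j, d}"
      using c n that ij by (auto simp: d_def)
    then show ?thesis
      using triple[of i j d] ij that by (auto simp: agrees_on_def)
  qed
  have "agrees_on (v_word n) w {..<n}"
    unfolding agrees_on_def
  proof (intro ballI impI)
    fix a b assume ab: "a \<in> {..<n}" "b \<in> {..<n}" "a \<noteq> b"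
    show "proj {a, b} w = proj {a, b} (v_word n)"
    proof (cases "i \<in> {a, b}")
      case True
      then show ?thesis
        using from_i[of a] from_i[of b] ab by (auto simp: insert_commute)
    next
      case False
      then have "proj {i, a} w \<noteq> proj {i, a} (u_word n)"
        using from_i[of a] u_word_pair_neq_v_word_pair[of i a n] ab ij by auto
      then show ?thesis
        using triple[of i a b] ab ij False by (auto simp: agrees_on_def)
    qed
  qed
  then show ?thesis ..
qed simp

section \<open>Identities in fewer than \<open>n\<close> variables fix \<open>u\<^sub>n\<close>\<close>

lemma set_u_word: "set (u_word n) = {..<n}"
  by (auto simp: u_word_def)

lemma proj_singleton: "proj {y} w = replicate (count_list w y) y"
  by (induction w) (auto simp: proj_def)

lemma ssubst_single_letters: "\<forall>z\<in>set s. length (\<sigma> z) = 1 \<Longrightarrow> ssubst \<sigma> s = map (hd \<circ> \<sigma>) s"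
  by (induction s) (auto simp: ssubst_def length_Suc_conv)

lemma instance_pair_blocks_short:
  assumes u: "p @ ssubst \<sigma> s @ q = u_word n" and st: "K_sat s t" and ab: "a < b" "b < n"
    and v: "proj {a, b} (p @ ssubst \<sigma> t @ q) = proj {a, b} (v_word n)"
  shows "\<forall>z\<in>set s. length (proj {a, b} (\<sigma> z)) \<le> 1"
proof -
  let ?blocks = "\<lambda>w. map (\<lambda>z. proj {a, b} (\<sigma> z)) w"
  have "proj {a, b} p @ concat (?blocks s) @ proj {a, b} q = map ((!) [a, b]) u2"
    using arg_cong[OF u, of "proj {a, b}"] proj_u_v_word_pair[OF ab] by (simp add: proj_append proj_ssubst)
  moreover have "proj {a, b} p @ concat (?blocks t) @ proj {a, b} q = map ((!) [a, b]) v2"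
    using v proj_u_v_word_pair[OF ab] by (simp add: proj_append proj_ssubst)
  moreover have "block_equiv (?blocks s) (?blocks t)"
    using st by (rule K_sat_block_equiv)
  ultimately have "\<forall>bk\<in>set (?blocks s). length bk \<le> 1"
    using ab(1) by (intro block_equiv_renamed_u2_v2) auto
  then show ?thesis by simp
qed

lemma instance_letters_single:
  assumes n: "3 \<le> n" and u: "p @ ssubst \<sigma> s @ q = u_word n" and st: "K_sat s t"
    and v: "agrees_on (v_word n) (p @ ssubst \<sigma> t @ q) {..<n}" and z: "z \<in> set s"
  shows "length (\<sigma> z) \<le> 1"
proof (rule ccontr)
  assume "\<not> length (\<sigma> z) \<le> 1"
  then obtain x0 x1 r where \<sigma>z: "\<sigma> z = x0 # x1 # r"
    by (cases "\<sigma> z"; cases "tl (\<sigma> z)") auto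
  have "set (\<sigma> z) \<subseteq> set (u_word n)"
    using z unfolding u[symmetric] by (auto simp: ssubst_def)
  then have x: "x0 < n" "x1 < n"
    using \<sigma>z set_u_word by auto
  define y where "y = (if x1 \<noteq> x0 then x1 else if x0 = 0 then 1 else 0)"
  have y: "y < n" "y \<noteq> x0" "x1 \<in> {x0, y}"
    using n x by (auto simp: y_def)
  define a b where "a = min x0 y" and "b = max x0 y"
  have ab: "a < b" "b < n" "{a, b} = {x0, y}"
    using x y by (auto simp: a_def b_def min_def max_def)
  have "proj {a, b} (p @ ssubst \<sigma> t @ q) = proj {a, b} (v_word n)"
    using v ab(1,2) by (simp add: agrees_on_def)
  then have "length (proj {a, b} (\<sigma> z)) \<le> 1"
    using instance_pair_blocks_short[OF u st ab(1,2)] z by blast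
  moreover have "2 \<le> length (proj {a, b} (\<sigma> z))"
    using \<sigma>z y unfolding ab(3) by (auto simp: proj_def)
  ultimately show False by simp
qed

lemma instance_covers_letters:
  assumes n: "3 \<le> n" and u: "p @ ssubst \<sigma> s @ q = u_word n" and st: "K_sat s t"
    and v: "agrees_on (v_word n) (p @ ssubst \<sigma> t @ q) {..<n}"
  shows "{..<n} \<subseteq> set (ssubst \<sigma> s)"
proof
  fix x assume x: "x \<in> {..<n}"
  show "x \<in> set (ssubst \<sigma> s)"
  proof (rule ccontr)
    assume x_s: "x \<notin> set (ssubst \<sigma> s)"
    define y where "y = (if x = 0 then 1 else 0 :: nat)"
    have y: "y < n" "y \<noteq> x"
      using n by (auto simp: y_def)
    have st': "K_sat (ssubst \<sigma> s) (ssubst \<sigma> t)"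
      using K_sat_context_ssubst[OF st, of "[]" \<sigma> "[]"] by simp
    then have x_t: "x \<notin> set (ssubst \<sigma> t)"
      using x_s K_sat_set by blast
    have "proj {x, y} w = proj {y} w" if "x \<notin> set w" for w
      using that by (auto simp: proj_def intro: filter_cong)
    then have "proj {x, y} (ssubst \<sigma> s) = proj {x, y} (ssubst \<sigma> t)"
      using x_s x_t K_sat_count_list[OF st'] by (simp add: proj_singleton)
    then have "proj {x, y} (p @ ssubst \<sigma> t @ q) = proj {x, y} (u_word n)"
      unfolding u[symmetric] by (simp add: proj_append)
    moreover have "proj {x, y} (p @ ssubst \<sigma> t @ q) = proj {x, y} (v_word n)"
      using v x y by (auto simp: agrees_on_def)
    ultimately show False
      using u_word_pair_neq_v_word_pair[of x y n] x y by auto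
  qed
qed

lemma u_word_instance_stable:
  assumes n: "3 \<le> n" and u: "p @ ssubst \<sigma> s @ q = u_word n" and st: "K_sat s t"
    and ne: "\<forall>x. \<sigma> x \<noteq> []" and card: "card (set s) < n"
  shows "p @ ssubst \<sigma> t @ q = u_word n"
proof -
  define w where "w = p @ ssubst \<sigma> t @ q"
  have w: "K_sat (u_word n) w"
    using K_sat_context_ssubst[OF st, of p \<sigma> q] u by (simp add: w_def)
  from K_sat_u_word_cases[OF w n] show ?thesis
  proof
    assume "agrees_on (u_word n) w {..<n}"
    moreover have "set w \<subseteq> {..<n}"
      using K_sat_set[OF w] set_u_word by simp
    moreover have "\<forall>a\<in>{..<n}. \<exists>b\<in>{..<n}. b \<noteq> a"
    proof
      fix a
      show "\<exists>b\<in>{..<n}. b \<noteq> a"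
        using n by (intro bexI[of _ "if a = 0 then 1 else 0"]) auto
    qed
    ultimately show ?thesis
      using eq_if_agrees_on[of w "{..<n}" "u_word n"] set_u_word by (simp add: w_def)
  next
    assume "agrees_on (v_word n) w {..<n}"
    have "\<forall>z\<in>set s. length (\<sigma> z) = 1"
    proof
      fix z assume "z \<in> set s"
      with \<open>agrees_on (v_word n) w {..<n}\<close> have "length (\<sigma> z) \<le> 1"
        using instance_letters_single[OF n u st] unfolding w_def by blast
      moreover have "\<sigma> z \<noteq> []"
        using ne by blast
      ultimately show "length (\<sigma> z) = 1"
        by (cases "\<sigma> z") auto
    qed
    then have "card (set (ssubst \<sigma> s)) \<le> card (set s)"
      by (simp add: ssubst_single_letters card_image_le)
    moreover have "n \<le> card (set (ssubst \<sigma> s))"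
      using instance_covers_letters[OF n u st] \<open>agrees_on (v_word n) w {..<n}\<close> card_mono[of _ "{..<n}"]
      unfolding w_def by fastforce
    ultimately show ?thesis
      using card by simp
  qed
qed

section \<open>No finite basis\<close>

definition fixes_word :: "sword \<Rightarrow> sword \<Rightarrow> sword \<Rightarrow> bool" where
  "fixes_word W u v \<longleftrightarrow>
     (\<forall>\<sigma> p q. (\<forall>x. \<sigma> x \<noteq> []) \<longrightarrow> (p @ ssubst \<sigma> u @ q = W \<longleftrightarrow> p @ ssubst \<sigma> v @ q = W))"

lemma fixes_wordD:
  "fixes_word W u v \<Longrightarrow> \<forall>x. \<sigma> x \<noteq> [] \<Longrightarrow> p @ ssubst \<sigma> u @ q = W \<longleftrightarrow> p @ ssubst \<sigma> v @ q = W"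
  by (simp add: fixes_word_def)

lemma ssubst_append: "ssubst \<sigma> (u @ v) = ssubst \<sigma> u @ ssubst \<sigma> v"
  by (simp add: ssubst_def)

lemma ssubst_ssubst: "ssubst \<sigma> (ssubst \<tau> u) = ssubst (\<lambda>x. ssubst \<sigma> (\<tau> x)) u"
  by (induction u) (simp_all add: ssubst_def)

lemma ssubst_ne_Nil: "\<forall>x. \<sigma> x \<noteq> [] \<Longrightarrow> w \<noteq> [] \<Longrightarrow> ssubst \<sigma> w \<noteq> []"
  by (cases w) (auto simp: ssubst_def)

lemma ssubst_singleton: "ssubst (\<lambda>x. [x]) w = w"
  by (induction w) (simp_all add: ssubst_def)

lemma derivable_fixes_word:
  assumes "derivable \<Sigma> u v" "\<forall>(s, t)\<in>\<Sigma>. fixes_word W s t"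
  shows "fixes_word W u v"
  using assms(1)
proof (induction rule: derivable.induct)
  case (ax u v)
  then show ?case using assms(2) by auto
next
  case (refl u)
  then show ?case by (simp add: fixes_word_def)
next
  case (sym u v)
  show ?case
    unfolding fixes_word_def
  proof (intro allI impI)
    fix \<sigma> :: "nat \<Rightarrow> sword" and p q
    assume "\<forall>x. \<sigma> x \<noteq> []"
    from fixes_wordD[OF sym.IH this]
    show "p @ ssubst \<sigma> v @ q = W \<longleftrightarrow> p @ ssubst \<sigma> u @ q = W" by (rule HOL.sym)
  qed
next
  case (trans u v w)
  show ?case
    unfolding fixes_word_def
  proof (intro allI impI)
    fix \<sigma> :: "nat \<Rightarrow> sword" and p q
    assume "\<forall>x. \<sigma> x \<noteq> []"
    from fixes_wordD[OF trans.IH(1) this] fixes_wordD[OF trans.IH(2) this]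
    show "p @ ssubst \<sigma> u @ q = W \<longleftrightarrow> p @ ssubst \<sigma> w @ q = W" by (rule HOL.trans)
  qed
next
  case (subst u v \<tau>)
  show ?case
    unfolding fixes_word_def ssubst_ssubst
  proof (intro allI impI)
    fix \<sigma> :: "nat \<Rightarrow> sword" and p q
    assume "\<forall>x. \<sigma> x \<noteq> []"
    then have "\<forall>x. ssubst \<sigma> (\<tau> x) \<noteq> []"
      using subst.hyps(2) ssubst_ne_Nil by blast
    from fixes_wordD[OF subst.IH this]
    show "p @ ssubst (\<lambda>x. ssubst \<sigma> (\<tau> x)) u @ q = W \<longleftrightarrow> p @ ssubst (\<lambda>x. ssubst \<sigma> (\<tau> x)) v @ q = W" .
  qed
next
  case (cong u v p' q')
  show ?case
    unfolding fixes_word_def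
  proof (intro allI impI)
    fix \<sigma> :: "nat \<Rightarrow> sword" and p q
    assume "\<forall>x. \<sigma> x \<noteq> []"
    from fixes_wordD[OF cong.IH this, of "p @ ssubst \<sigma> p'" "ssubst \<sigma> q' @ q"]
    show "p @ ssubst \<sigma> (p' @ u @ q') @ q = W \<longleftrightarrow> p @ ssubst \<sigma> (p' @ v @ q') @ q = W"
      by (simp add: ssubst_append)
  qed
qed

lemma K_sat_fixes_u_word:
  assumes n: "3 \<le> n" and st: "K_sat s t" and card: "card (set s) < n"
  shows "fixes_word (u_word n) s t"
  unfolding fixes_word_def
proof (intro allI impI iffI)
  fix \<sigma> :: "nat \<Rightarrow> sword" and p q
  assume ne: "\<forall>x. \<sigma> x \<noteq> []"
  have "card (set t) < n"
    using K_sat_set[OF st] card by simp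
  then show "p @ ssubst \<sigma> s @ q = u_word n" if "p @ ssubst \<sigma> t @ q = u_word n"
    using u_word_instance_stable[OF n that K_sat_sym[OF st] ne] by blast
  show "p @ ssubst \<sigma> t @ q = u_word n" if "p @ ssubst \<sigma> s @ q = u_word n"
    using u_word_instance_stable[OF n that st ne card] .
qed

lemma finite_basis_fixes_u_word:
  assumes fin: "finite \<Sigma>" and sound: "\<forall>(s, t)\<in>\<Sigma>. K_sat s t"
  obtains n where "3 \<le> n" "\<forall>(s, t)\<in>\<Sigma>. fixes_word (u_word n) s t"
proof -
  obtain N where N: "\<forall>k\<in>(\<lambda>(s, t). card (set s)) ` \<Sigma>. k < N"
    using finite_nat_set_iff_bounded[THEN iffD1, OF finite_imageI[OF fin]] by blast
  have "\<forall>(s, t)\<in>\<Sigma>. fixes_word (u_word (N + 3)) s t"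
  proof (intro ballI, clarify)
    fix s t assume st: "(s, t) \<in> \<Sigma>"
    then have "card (set s) < N + 3"
      using N by force
    moreover have "K_sat s t"
      using sound st by auto
    ultimately show "fixes_word (u_word (N + 3)) s t"
      using K_sat_fixes_u_word[of "N + 3"] by simp
  qed
  then show ?thesis
    using that[of "N + 3"] by simp
qed

theorem theorem1:
  shows "\<not> (\<exists>\<Sigma>. finite \<Sigma>
              \<and> (\<forall>(u, v) \<in> \<Sigma>. u \<noteq> [] \<and> v \<noteq> [] \<and> K_sat u v)
              \<and> (\<forall>u v. u \<noteq> [] \<longrightarrow> v \<noteq> [] \<longrightarrow> K_sat u v \<longrightarrow> derivable \<Sigma> u v))"
proof
  assume "\<exists>\<Sigma>. finite \<Sigma>
              \<and> (\<forall>(u, v) \<in> \<Sigma>. u \<noteq> [] \<and> v \<noteq> [] \<and> K_sat u v)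
              \<and> (\<forall>u v. u \<noteq> [] \<longrightarrow> v \<noteq> [] \<longrightarrow> K_sat u v \<longrightarrow> derivable \<Sigma> u v)"
  then obtain \<Sigma> where fin: "finite \<Sigma>" and sound: "\<forall>(u, v) \<in> \<Sigma>. u \<noteq> [] \<and> v \<noteq> [] \<and> K_sat u v"
    and complete: "\<forall>u v. u \<noteq> [] \<longrightarrow> v \<noteq> [] \<longrightarrow> K_sat u v \<longrightarrow> derivable \<Sigma> u v"
    by blast
  from sound have "\<forall>(s, t)\<in>\<Sigma>. K_sat s t"
    by auto
  with fin obtain n where n: "3 \<le> n" and basis_fixes: "\<forall>(s, t)\<in>\<Sigma>. fixes_word (u_word n) s t"
    by (rule finite_basis_fixes_u_word)
  have "u_word n \<noteq> []" "v_word n \<noteq> []"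
    using n by (simp_all add: u_word_def v_word_def)
  then have "derivable \<Sigma> (u_word n) (v_word n)"
    using complete K_sat_u_v_word by blast
  then have "fixes_word (u_word n) (u_word n) (v_word n)"
    using basis_fixes by (rule derivable_fixes_word)
  then have "v_word n = u_word n"
    using fixes_wordD[of "u_word n" "u_word n" "v_word n" "\<lambda>x. [x]" "[]" "[]"]
    by (simp add: ssubst_singleton)
  moreover have "u_word n \<noteq> v_word n"
    using n by (intro u_word_neq_v_word) simp
  ultimately show False
    by simp
qed

end
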